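(* Let $p$ be a prime, $n\ge 1$ an integer, $\mathbb{F}=\mathbb{F}_{p^n}$ and $F=|\mathbb{F}|=p^n$. Let $\theta,\gamma$ be real numbers. Suppose $f,g:\mathbb{F}\to[0,1]$ satisfy $f(m)\ge g(m)\ge 0$ for all $m\in\mathbb{F}$, and $\mathbb{E}(f)\ge \mathbb{E}(g)\ge F^{-\theta}$. If $$\|\hat f\|_{1/3}<F^{1+\gamma},$$ then $$\Lambda_3(f,g,f)\ \ge\ 10^{-10}p^{-8}F^{-12\theta-4\gamma}\quad\text{and}\quad \Lambda_3(g,f,f)\ \ge\ 10^{-10}p^{-8}F^{-12\theta-4\gamma}.$$
   Context: For $h:\mathbb{F}\to\mathbb{C}$, $\mathbb{E}(h)=F^{-1}\sum_{m\in\mathbb{F}}h(m)$. Identify $\mathbb{F}$ with $\mathbb{F}_p^n$ via a fixed standard $\mathbb{F}_p$-basis, and let $a\cdot m$ be the dot product with respect to this basis. With $\omega=e^{2\pi i/p}$, the Fourier transform is $\hat h(a)=\sum_{m\in\mathbb{F}}h(m)\omega^{a\cdot m}$. For $t>0$, $\|\hat h\|_t=\left(\sum_{a\in\mathbb{F}}|\hat h(a)|^t\right)^{1/t}$ (a quasinorm for $t<1$). For $f_1,f_2,f_3:\mathbb{F}\to\mathbb{C}$, $\Lambda_3(f_1,f_2,f_3)=F^{-2}\sum_{m,d\in\mathbb{F}}f_1(m)f_2(m+d)f_3(m+2d)$. *)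

theory Defs
  imports "HOL-Analysis.Analysis"
begin

text \<open>The field F_{p^n}, identified (as an additive group) with F_p^n via a fixed
basis.  Vectors are coordinate functions nat => int, with coordinates i < n in
{0..p-1} and all other coordinates 0.\<close>

definition vecs :: "nat \<Rightarrow> nat \<Rightarrow> (nat \<Rightarrow> int) set" where
  "vecs p n = {v. (\<forall>i<n. 0 \<le> v i \<and> v i < int p) \<and> (\<forall>i\<ge>n. v i = 0)}"

definition vadd :: "nat \<Rightarrow> nat \<Rightarrow> (nat \<Rightarrow> int) \<Rightarrow> (nat \<Rightarrow> int) \<Rightarrow> (nat \<Rightarrow> int)" where
  "vadd p n u v = (\<lambda>i. if i < n then (u i + v i) mod int p else 0)"

definition dotp :: "nat \<Rightarrow> (nat \<Rightarrow> int) \<Rightarrow> (nat \<Rightarrow> int) \<Rightarrow> int" where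
  "dotp n a m = (\<Sum>i<n. a i * m i)"

definition omega :: "nat \<Rightarrow> complex" where
  "omega p = exp (2 * of_real pi * \<i> / of_nat p)"

definition expect :: "nat \<Rightarrow> nat \<Rightarrow> ((nat \<Rightarrow> int) \<Rightarrow> real) \<Rightarrow> real" where
  "expect p n h = (\<Sum>m\<in>vecs p n. h m) / real (p ^ n)"

definition fourier :: "nat \<Rightarrow> nat \<Rightarrow> ((nat \<Rightarrow> int) \<Rightarrow> real) \<Rightarrow> (nat \<Rightarrow> int) \<Rightarrow> complex" where
  "fourier p n h a = (\<Sum>m\<in>vecs p n. of_real (h m) * omega p powi (dotp n a m))"

definition fnorm :: "nat \<Rightarrow> nat \<Rightarrow> real \<Rightarrow> ((nat \<Rightarrow> int) \<Rightarrow> real) \<Rightarrow> real" where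
  "fnorm p n t h = (\<Sum>a\<in>vecs p n. cmod (fourier p n h a) powr t) powr (1 / t)"

definition Lambda3 :: "nat \<Rightarrow> nat \<Rightarrow> ((nat \<Rightarrow> int) \<Rightarrow> real) \<Rightarrow> ((nat \<Rightarrow> int) \<Rightarrow> real)
    \<Rightarrow> ((nat \<Rightarrow> int) \<Rightarrow> real) \<Rightarrow> real" where
  "Lambda3 p n f1 f2 f3 =
     (\<Sum>m\<in>vecs p n. \<Sum>d\<in>vecs p n.
        f1 m * f2 (vadd p n m d) * f3 (vadd p n m (vadd p n d d))) / real (p ^ n) ^ 2"

end

theory Submission
  imports Defs "HOL-Library.Function_Algebras"
begin

(* Write Lambda_3 = F^-2 sum_d P(d), where P(d) is the weight of the progressions with common
   difference d, and let beta = E(g).  Fourier inversion gives F P(0) = sum_e P^(e), and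
   |P^(e)| <= sum_d P(d), so F P(0) <= (sum_e |P^(e)|^(1/3)) (sum_d P(d))^(2/3).
   Expanding both copies of f in P^(e) by Fourier inversion, each pair of frequencies of f
   contributes to a single e only, with a coefficient bounded by F sum g; subadditivity of
   t |-> t^(1/3) then gives sum_e |P^(e)|^(1/3) <= beta^(1/3) ||f^||_(1/3)^(2/3).
   Since P(0) >= sum g^3 >= F beta^3, this yields Lambda_3 >= F beta^4 / ||f^||_(1/3), and the
   stated bound follows from beta >= F^-theta and F beta <= ||f^||_(1/3) < F^(1+gamma). *)

section \<open>The group F_p^n\<close>

text \<open>Frequencies are arbitrary integer vectors, added pointwise in \<open>\<int>\<^sup>n\<close>;
  \<open>vanishes_mod\<close> says that such a vector is zero in F_p^n.\<close>

definition vanishes_mod :: "nat \<Rightarrow> nat \<Rightarrow> (nat \<Rightarrow> int) \<Rightarrow> bool" where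
  "vanishes_mod p n u \<longleftrightarrow> (\<forall>i<n. int p dvd u i)"

lemma bij_betw_PiE_vecs:
  "bij_betw (\<lambda>v i. if i < n then v i else 0) (PiE {..<n} (\<lambda>_. {0..<int p})) (vecs p n)"
  by (rule bij_betwI[where g = "\<lambda>v. restrict v {..<n}"])
    (auto simp: vecs_def PiE_def extensional_def)

lemma finite_vecs: "finite (vecs p n)"
  using bij_betw_finite[OF bij_betw_PiE_vecs] finite_PiE[of "{..<n}" "\<lambda>_. {0..<int p}"] by simp

lemma card_vecs: "card (vecs p n) = p ^ n"
  using bij_betw_same_card[OF bij_betw_PiE_vecs] by (simp add: card_PiE)

lemma zero_in_vecs: "p > 0 \<Longrightarrow> 0 \<in> vecs p n"
  by (simp add: vecs_def)

lemma vadd_in_vecs: "p > 0 \<Longrightarrow> vadd p n x y \<in> vecs p n"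
  by (auto simp: vadd_def vecs_def)

lemma vadd_zero_right: "x \<in> vecs p n \<Longrightarrow> vadd p n x 0 = x"
  by (auto simp: vadd_def vecs_def fun_eq_iff)

lemma vecs_eq_if_vanishes_mod:
  assumes "x \<in> vecs p n" "y \<in> vecs p n" "vanishes_mod p n (x - y)"
  shows "x = y"
proof
  fix i
  show "x i = y i"
  proof (cases "i < n")
    case True
    then have "x i mod int p = y i mod int p"
      using assms(3) by (simp add: vanishes_mod_def mod_eq_dvd_iff)
    with True assms(1,2) show ?thesis by (simp add: vecs_def)
  next
    case False
    with assms(1,2) show ?thesis by (simp add: vecs_def)
  qed
qed

lemma vanishes_mod_vecs_iff:
  "x \<in> vecs p n \<Longrightarrow> y \<in> vecs p n \<Longrightarrow> vanishes_mod p n (x - y) \<longleftrightarrow> x = y"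
  using vecs_eq_if_vanishes_mod by (auto simp: vanishes_mod_def)

lemma card_vanishes_mod_le_1: "card {e \<in> vecs p n. vanishes_mod p n (w + e)} \<le> 1"
proof -
  have "e = e'" if "e \<in> vecs p n" "e' \<in> vecs p n"
    "vanishes_mod p n (w + e)" "vanishes_mod p n (w + e')" for e e'
  proof (rule vecs_eq_if_vanishes_mod[OF that(1,2)])
    have "int p dvd (w i + e i) - (w i + e' i)" if "i < n" for i
      using that \<open>vanishes_mod p n (w + e)\<close> \<open>vanishes_mod p n (w + e')\<close>
      by (intro dvd_diff) (auto simp: vanishes_mod_def)
    then show "vanishes_mod p n (e - e')" by (simp add: vanishes_mod_def)
  qed
  then show ?thesis by (auto simp: card_le_Suc0_iff_eq finite_vecs)
qed

lemma sum_vadd_translate: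
  assumes "p > 0"
  shows "(\<Sum>x\<in>vecs p n. h (vadd p n x t)) = (\<Sum>x\<in>vecs p n. h x)"
proof -
  have inj: "inj_on (\<lambda>x. vadd p n x t) (vecs p n)"
  proof (rule inj_onI)
    fix x y assume "x \<in> vecs p n" "y \<in> vecs p n" "vadd p n x t = vadd p n y t"
    moreover have "int p dvd (x i + t i) - (y i + t i)" if "i < n" "vadd p n x t = vadd p n y t" for i
      using that by (metis (mono_tags) vadd_def mod_eq_dvd_iff)
    ultimately show "x = y" by (intro vecs_eq_if_vanishes_mod) (auto simp: vanishes_mod_def)
  qed
  have "(\<lambda>x. vadd p n x t) ` vecs p n = vecs p n"
    by (rule endo_inj_surj[OF finite_vecs _ inj]) (auto simp: vadd_in_vecs assms)
  then show ?thesis using sum.reindex[OF inj, of h] by simp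
qed

section \<open>Characters\<close>

lemma omega_nonzero [simp]: "omega p \<noteq> 0"
  by (simp add: omega_def)

lemma omega_powi_eq_1_iff:
  assumes "p > 0"
  shows "omega p powi k = 1 \<longleftrightarrow> int p dvd k"
proof -
  have "omega p powi k = exp (2 * pi * \<i> * of_int k / of_nat p)"
    unfolding omega_def exp_power_int by (simp add: field_simps)
  also have "\<dots> = 1 \<longleftrightarrow> (\<exists>j::int. real_of_int k = real_of_int (j * int p))"
    unfolding exp_eq_1 using assms by (simp add: field_simps)
  also have "\<dots> \<longleftrightarrow> int p dvd k"
    by (simp only: of_int_eq_iff) (auto simp: dvd_def mult.commute)
  finally show ?thesis .
qed

lemma omega_powi_cong:
  assumes "p > 0" "int p dvd k - l"
  shows "omega p powi k = omega p powi l"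
proof -
  have "omega p powi k = omega p powi (k - l) * omega p powi l"
    by (simp flip: power_int_add)
  with assms show ?thesis by (simp add: omega_powi_eq_1_iff)
qed

lemma norm_omega_powi [simp]: "cmod (omega p powi k) = 1"
  by (simp add: omega_def norm_power_int)

lemma dotp_add_left: "dotp n (a + b) x = dotp n a x + dotp n b x"
  by (simp add: dotp_def algebra_simps sum.distrib)

lemma dotp_commute: "dotp n a x = dotp n x a"
  by (simp add: dotp_def mult.commute)

definition character :: "nat \<Rightarrow> nat \<Rightarrow> (nat \<Rightarrow> int) \<Rightarrow> (nat \<Rightarrow> int) \<Rightarrow> complex" where
  "character p n a x = omega p powi dotp n a x"

lemma character_nonzero [simp]: "character p n a x \<noteq> 0"
  by (simp add: character_def)

lemma norm_character [simp]: "cmod (character p n a x) = 1"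
  by (simp add: character_def)

lemma character_zero [simp]: "character p n 0 x = 1"
  by (simp add: character_def dotp_def)

lemma character_at_zero [simp]: "character p n a 0 = 1"
  by (simp add: character_def dotp_def)

lemma character_add: "character p n (a + b) x = character p n a x * character p n b x"
  by (simp add: character_def dotp_add_left power_int_add)

lemma character_uminus: "character p n (- a) x = inverse (character p n a x)"
  using character_add[of p n a "- a" x] by (simp add: field_simps)

lemma character_diff: "character p n (a - b) x = character p n a x / character p n b x"
  using character_add[of p n a "- b" x] by (simp add: character_uminus field_simps)

lemma character_commute: "character p n a x = character p n x a"
  by (simp add: character_def dotp_commute)

lemma character_vadd:
  assumes "p > 0"
  shows "character p n a (vadd p n x y) = character p n a x * character p n a y"
proof -
  have "dotp n a (vadd p n x y) - (dotp n a x + dotp n a y)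
      = (\<Sum>i<n. a i * ((x i + y i) mod int p - (x i + y i)))"
    by (simp add: dotp_def vadd_def algebra_simps sum_subtractf sum.distrib)
  also have "int p dvd \<dots>"
    by (intro dvd_sum dvd_mult) (metis mod_mod_trivial mod_eq_dvd_iff)
  finally show ?thesis
    unfolding character_def using assms by (simp add: omega_powi_cong power_int_add)
qed

section \<open>Orthogonality and Fourier inversion\<close>

lemma fourier_eq_sum_character:
  "fourier p n h a = (\<Sum>x\<in>vecs p n. of_real (h x) * character p n a x)"
  by (simp add: fourier_def character_def)

lemma sum_character:
  assumes "p > 0"
  shows "(\<Sum>x\<in>vecs p n. character p n u x) = (if vanishes_mod p n u then of_nat (p ^ n) else 0)"
proof (cases "vanishes_mod p n u")
  case True
  then have "int p dvd dotp n u x" for x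
    unfolding dotp_def vanishes_mod_def by (auto intro!: dvd_sum)
  then have "character p n u x = 1" for x
    using assms by (simp add: character_def omega_powi_eq_1_iff)
  with True show ?thesis by (simp add: card_vecs)
next
  case False
  then obtain k where k: "k < n" "\<not> int p dvd u k" by (auto simp: vanishes_mod_def)
  define t where "t = (\<lambda>i. if i = k then 1 else (0::int))"
  \<comment> \<open>translating by the unit vector t multiplies the sum by a nontrivial root of unity\<close>
  have "dotp n u t = u k"
    using k(1) by (simp add: dotp_def t_def if_distrib cong: if_cong)
  with k assms have nontrivial: "character p n u t \<noteq> 1"
    by (simp add: character_def omega_powi_eq_1_iff)
  have "(\<Sum>x\<in>vecs p n. character p n u x) = (\<Sum>x\<in>vecs p n. character p n u (vadd p n x t))"
    by (rule sum_vadd_translate[OF assms, symmetric])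
  also have "\<dots> = (\<Sum>x\<in>vecs p n. character p n u x) * character p n u t"
    using assms by (simp add: character_vadd sum_distrib_right)
  finally show ?thesis using False nontrivial by (simp add: algebra_simps)
qed

lemma sum_character_vecs:
  assumes "p > 0" "x \<in> vecs p n" "y \<in> vecs p n"
  shows "(\<Sum>a\<in>vecs p n. character p n (x - y) a) = (if x = y then of_nat (p ^ n) else 0)"
  using assms by (simp add: sum_character vanishes_mod_vecs_iff)

lemma fourier_inversion:
  assumes "p > 0" "x \<in> vecs p n"
  shows "of_real (h x) = (\<Sum>a\<in>vecs p n. fourier p n h a * character p n (- a) x) / of_nat (p ^ n)"
proof -
  have "character p n a m * character p n (- a) x = character p n (m - x) a" for a m
    by (simp add: character_diff character_uminus character_commute[of p n a] field_simps)
  then have "fourier p n h a * character p n (- a) x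
      = (\<Sum>m\<in>vecs p n. of_real (h m) * character p n (m - x) a)" for a
    by (simp add: fourier_eq_sum_character sum_distrib_right mult.assoc)
  then have "(\<Sum>a\<in>vecs p n. fourier p n h a * character p n (- a) x)
      = (\<Sum>m\<in>vecs p n. of_real (h m) * (\<Sum>a\<in>vecs p n. character p n (m - x) a))"
    by (simp add: sum_distrib_left) (rule sum.swap)
  also have "\<dots> = of_real (h x) * of_nat (p ^ n)"
    using assms by (simp add: sum_character_vecs finite_vecs if_distrib cong: if_cong)
  finally show ?thesis using assms by simp
qed

lemma sum_fourier:
  assumes "p > 0"
  shows "(\<Sum>e\<in>vecs p n. fourier p n h e) = of_nat (p ^ n) * of_real (h 0)"
  using fourier_inversion[OF assms zero_in_vecs[OF assms, of n], of h] assms by (simp add: field_simps)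

lemma fourier_zero: "fourier p n h 0 = of_real (\<Sum>x\<in>vecs p n. h x)"
  by (simp add: fourier_def dotp_def)

lemma norm_fourier_le: "cmod (fourier p n h a) \<le> (\<Sum>x\<in>vecs p n. \<bar>h x\<bar>)"
  unfolding fourier_eq_sum_character
  by (rule order_trans[OF norm_sum]) (simp add: norm_mult)

lemma norm_fourier_le_fnorm:
  assumes "a \<in> vecs p n" "t > 0"
  shows "cmod (fourier p n h a) \<le> fnorm p n t h"
proof -
  have "cmod (fourier p n h a) = (cmod (fourier p n h a) powr t) powr (1 / t)"
    using assms by (simp add: powr_powr)
  also have "\<dots> \<le> fnorm p n t h"
    unfolding fnorm_def using assms
    by (intro powr_mono2 member_le_sum) (auto simp: finite_vecs)
  finally show ?thesis .
qed

lemma card_mult_expect_le_fnorm: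
  assumes "p > 0" "t > 0" "\<And>m. m \<in> vecs p n \<Longrightarrow> g m \<le> f m"
  shows "real (p ^ n) * expect p n g \<le> fnorm p n t f"
proof -
  have "real (p ^ n) * expect p n g \<le> (\<Sum>m\<in>vecs p n. f m)"
    using assms by (simp add: expect_def sum_mono)
  also have "\<dots> \<le> fnorm p n t f"
    using norm_fourier_le_fnorm[OF zero_in_vecs[OF \<open>p > 0\<close>] \<open>t > 0\<close>, where h = f]
    by (simp add: fourier_zero del: of_real_sum) (meson abs_ge_self order_trans)
  finally show ?thesis .
qed

lemma fnorm_one_third: "fnorm p n (1/3) h = (\<Sum>a\<in>vecs p n. cmod (fourier p n h a) powr (1/3)) ^ 3"
  by (simp add: fnorm_def sum_nonneg)

section \<open>Finite sums and real powers\<close>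

lemma powr_add_le_add_powr:
  fixes x y r :: real
  assumes "0 \<le> x" "0 \<le> y" "0 < r" "r \<le> 1"
  shows "(x + y) powr r \<le> x powr r + y powr r"
proof (cases "x + y = 0")
  case True
  with assms show ?thesis by simp
next
  case False
  define s where "s = x + y"
  with False assms have s: "s > 0" by simp
  have "x / s \<le> (x / s) powr r" "y / s \<le> (y / s) powr r"
    using powr_mono'[of r 1 "x / s"] powr_mono'[of r 1 "y / s"] assms s
    by (simp_all add: s_def divide_le_eq_1)
  then have "x / s + y / s \<le> (x powr r + y powr r) / s powr r"
    using assms s by (simp add: powr_divide add_divide_distrib)
  moreover have "x / s + y / s = 1"
    using s by (simp add: s_def add_divide_distrib[symmetric])
  ultimately show ?thesis using s by (simp add: s_def field_simps)
qed

lemma powr_sum_le_sum_powr: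
  fixes r :: real
  assumes "finite A" "\<And>a. a \<in> A \<Longrightarrow> 0 \<le> h a" "0 < r" "r \<le> 1"
  shows "(\<Sum>a\<in>A. h a) powr r \<le> (\<Sum>a\<in>A. h a powr r)"
  using assms
proof (induction A rule: finite_induct)
  case empty
  then show ?case by simp
next
  case (insert a A)
  then have "(\<Sum>a\<in>insert a A. h a) powr r \<le> h a powr r + (\<Sum>a\<in>A. h a) powr r"
    by (simp add: powr_add_le_add_powr sum_nonneg)
  with insert show ?case by simp
qed

lemma norm_sum_powr_le:
  fixes r :: real and z :: "'a \<Rightarrow> 'b :: real_normed_vector"
  assumes "finite A" "0 < r" "r \<le> 1"
  shows "norm (\<Sum>a\<in>A. z a) powr r \<le> (\<Sum>a\<in>A. norm (z a) powr r)"
proof -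
  have "norm (\<Sum>a\<in>A. z a) powr r \<le> (\<Sum>a\<in>A. norm (z a)) powr r"
    using assms by (intro powr_mono2 norm_sum) auto
  also have "\<dots> \<le> (\<Sum>a\<in>A. norm (z a) powr r)"
    using assms by (intro powr_sum_le_sum_powr) auto
  finally show ?thesis .
qed

lemma sum_le_sum_powr_mult_powr:
  fixes r M :: real
  assumes "\<And>a. a \<in> A \<Longrightarrow> 0 \<le> x a \<and> x a \<le> M" "r \<le> 1"
  shows "(\<Sum>a\<in>A. x a) \<le> (\<Sum>a\<in>A. x a powr r) * M powr (1 - r)"
proof -
  have "x a \<le> x a powr r * M powr (1 - r)" if "a \<in> A" for a
  proof (cases "x a = 0")
    case False
    with assms that have "x a = x a powr r * x a powr (1 - r)"
      by (simp flip: powr_add)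
    also have "\<dots> \<le> x a powr r * M powr (1 - r)"
      using assms that by (intro mult_left_mono powr_mono2) auto
    finally show ?thesis .
  qed simp
  then show ?thesis by (simp add: sum_distrib_right sum_mono)
qed

lemma sum_le_if_card_nonzero_le_1:
  fixes x :: "'a \<Rightarrow> real"
  assumes "finite A" "card {a \<in> A. x a \<noteq> 0} \<le> 1" "\<And>a. a \<in> A \<Longrightarrow> x a \<le> M" "0 \<le> M"
  shows "(\<Sum>a\<in>A. x a) \<le> M"
proof -
  have "(\<Sum>a\<in>A. x a) = (\<Sum>a\<in>{a \<in> A. x a \<noteq> 0}. x a)"
    using assms(1) by (intro sum.mono_neutral_right) auto
  also have "\<dots> \<le> real (card {a \<in> A. x a \<noteq> 0}) * M"
    using assms(3) sum_bounded_above[of "{a \<in> A. x a \<noteq> 0}" x M] by auto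
  also have "\<dots> \<le> M"
    using assms(2,4) by (simp add: mult_left_le_one_le)
  finally show ?thesis .
qed

lemma sum_norm_bilinear_powr_le:
  fixes u v :: "'a \<Rightarrow> complex" and G :: "'a \<Rightarrow> 'a \<Rightarrow> 'e \<Rightarrow> complex" and r C :: real
  assumes "finite A" "finite E" "0 < r" "r \<le> 1"
    and support: "\<And>a b. a \<in> A \<Longrightarrow> b \<in> A \<Longrightarrow> card {e \<in> E. G a b e \<noteq> 0} \<le> 1"
    and bound: "\<And>a b e. a \<in> A \<Longrightarrow> b \<in> A \<Longrightarrow> e \<in> E \<Longrightarrow> cmod (G a b e) \<le> C"
  shows "(\<Sum>e\<in>E. cmod (\<Sum>a\<in>A. \<Sum>b\<in>A. u a * v b * G a b e) powr r)
    \<le> C powr r * (\<Sum>a\<in>A. cmod (u a) powr r) * (\<Sum>b\<in>A. cmod (v b) powr r)"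
proof -
  let ?w = "\<lambda>a b. cmod (u a) powr r * cmod (v b) powr r"
  have "(\<Sum>e\<in>E. cmod (\<Sum>a\<in>A. \<Sum>b\<in>A. u a * v b * G a b e) powr r)
      \<le> (\<Sum>e\<in>E. \<Sum>a\<in>A. \<Sum>b\<in>A. ?w a b * cmod (G a b e) powr r)"
  proof (intro sum_mono)
    fix e
    have "cmod (\<Sum>a\<in>A. \<Sum>b\<in>A. u a * v b * G a b e) powr r
        \<le> (\<Sum>a\<in>A. cmod (\<Sum>b\<in>A. u a * v b * G a b e) powr r)"
      using assms by (intro norm_sum_powr_le) auto
    also have "\<dots> \<le> (\<Sum>a\<in>A. \<Sum>b\<in>A. cmod (u a * v b * G a b e) powr r)"
      using assms by (intro sum_mono norm_sum_powr_le) auto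
    finally show "cmod (\<Sum>a\<in>A. \<Sum>b\<in>A. u a * v b * G a b e) powr r
        \<le> (\<Sum>a\<in>A. \<Sum>b\<in>A. ?w a b * cmod (G a b e) powr r)"
      by (simp add: norm_mult powr_mult)
  qed
  also have "\<dots> = (\<Sum>a\<in>A. \<Sum>b\<in>A. ?w a b * (\<Sum>e\<in>E. cmod (G a b e) powr r))"
    by (simp add: sum_distrib_left sum.swap[of _ E])
  also have "\<dots> \<le> (\<Sum>a\<in>A. \<Sum>b\<in>A. ?w a b * C powr r)"
  proof (intro sum_mono mult_left_mono)
    fix a b assume "a \<in> A" "b \<in> A"
    moreover have "{e \<in> E. cmod (G a b e) powr r \<noteq> 0} = {e \<in> E. G a b e \<noteq> 0}" by auto
    ultimately show "(\<Sum>e\<in>E. cmod (G a b e) powr r) \<le> C powr r"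
      using assms by (intro sum_le_if_card_nonzero_le_1) (auto intro: powr_mono2)
  qed simp
  also have "\<dots> = C powr r * (\<Sum>a\<in>A. cmod (u a) powr r) * (\<Sum>b\<in>A. cmod (v b) powr r)"
    by (simp add: sum_distrib_left sum_distrib_right mult_ac)
  finally show ?thesis .
qed

lemma sum_cube_ge_card_mult_mean_cube:
  fixes g :: "'a \<Rightarrow> real"
  assumes "\<And>a. a \<in> A \<Longrightarrow> 0 \<le> g a"
  shows "real (card A) * ((\<Sum>a\<in>A. g a) / real (card A)) ^ 3 \<le> (\<Sum>a\<in>A. g a ^ 3)"
proof -
  define \<mu> where "\<mu> = (\<Sum>a\<in>A. g a) / real (card A)"
  have "\<mu> \<ge> 0" unfolding \<mu>_def using assms by (simp add: sum_nonneg)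
  \<comment> \<open>the tangent line of the convex function t^3 at the mean\<close>
  have tangent: "\<mu> ^ 3 + 3 * \<mu>\<^sup>2 * (g a - \<mu>) \<le> g a ^ 3" if "a \<in> A" for a
  proof -
    have "g a ^ 3 - (\<mu> ^ 3 + 3 * \<mu>\<^sup>2 * (g a - \<mu>)) = (g a - \<mu>)\<^sup>2 * (g a + 2 * \<mu>)"
      by (simp add: power2_eq_square power3_eq_cube algebra_simps)
    also have "\<dots> \<ge> 0" using assms[OF that] \<open>\<mu> \<ge> 0\<close> by simp
    finally show ?thesis by simp
  qed
  have "(\<Sum>a\<in>A. g a) - real (card A) * \<mu> = 0"
    by (cases "card A = 0") (auto simp: \<mu>_def card_eq_0_iff)
  then have "real (card A) * \<mu> ^ 3 = (\<Sum>a\<in>A. \<mu> ^ 3 + 3 * \<mu>\<^sup>2 * (g a - \<mu>))"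
    by (simp add: sum.distrib sum_distrib_left[symmetric] sum_subtractf)
  also have "\<dots> \<le> (\<Sum>a\<in>A. g a ^ 3)"
    using tangent by (rule sum_mono)
  finally show ?thesis unfolding \<mu>_def .
qed

lemma cube_le_mult_of_le:
  fixes x y :: real
  assumes "0 \<le> x" "x \<le> y"
  shows "x ^ 3 \<le> y * x * y"
proof -
  have "x * x \<le> y * y" using assms by (intro mult_mono) auto
  then have "x * (x * x) \<le> x * (y * y)" using assms by (intro mult_left_mono) auto
  then show ?thesis by (simp add: power3_eq_cube mult_ac)
qed

lemma sum_swap3: "(\<Sum>x\<in>A. \<Sum>y\<in>B. \<Sum>z\<in>C. f x y z) = (\<Sum>y\<in>B. \<Sum>z\<in>C. \<Sum>x\<in>A. f x y z)"
  by (subst sum.swap) (rule sum.cong[OF refl sum.swap])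

lemma divide_le_of_root_inequality:
  fixes N \<beta> S L :: real
  assumes "0 < N" "0 < \<beta>" "0 \<le> S" "0 \<le> L"
    and ineq: "N\<^sup>2 * \<beta> ^ 3 \<le> \<beta> powr (1/3) * S\<^sup>2 * L powr (2/3)"
  shows "N * \<beta> ^ 4 / S ^ 3 \<le> L / N\<^sup>2"
proof -
  have "0 < N\<^sup>2 * \<beta> ^ 3" using assms(1,2) by simp
  with ineq have "L \<noteq> 0" "S \<noteq> 0" by auto
  with assms(3,4) have "L > 0" "S > 0" by simp_all
  have "(\<beta> powr (1/3)) ^ 3 = \<beta>" "(L powr (2/3)) ^ 3 = L\<^sup>2"
    using \<open>\<beta> > 0\<close> \<open>L > 0\<close> by (simp_all add: powr_power)
  have "\<beta> * (N ^ 3 * \<beta> ^ 4)\<^sup>2 = (N\<^sup>2 * \<beta> ^ 3) ^ 3"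
    by algebra
  also have "\<dots> \<le> (\<beta> powr (1/3) * S\<^sup>2 * L powr (2/3)) ^ 3"
    using ineq \<open>0 < N\<^sup>2 * \<beta> ^ 3\<close> by (intro power_mono) auto
  also have "\<dots> = \<beta> * (S ^ 3 * L)\<^sup>2"
    using \<open>(\<beta> powr (1/3)) ^ 3 = \<beta>\<close> \<open>(L powr (2/3)) ^ 3 = L\<^sup>2\<close>
    by (simp add: power_mult_distrib flip: power_mult)
  finally have "(N ^ 3 * \<beta> ^ 4)\<^sup>2 \<le> (S ^ 3 * L)\<^sup>2"
    using \<open>\<beta> > 0\<close> by simp
  then have "N ^ 3 * \<beta> ^ 4 \<le> S ^ 3 * L"
    by (rule power2_le_imp_le) (use \<open>S > 0\<close> \<open>L > 0\<close> in simp)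
  with \<open>0 < N\<close> \<open>S > 0\<close> show ?thesis
    by (simp add: divide_simps power2_eq_square power3_eq_cube mult_ac)
qed

lemma powr_le_of_density_bounds:
  fixes N \<beta> F \<theta> \<gamma> :: real
  assumes "0 < N" "0 < \<beta>" "\<beta> \<le> 1" "N powr (- \<theta>) \<le> \<beta>" "N * \<beta> \<le> F" "F < N powr (1 + \<gamma>)"
  shows "N powr (-12 * \<theta> - 4 * \<gamma>) \<le> N * \<beta> ^ 4 / F"
proof -
  define k where "k = N / F"
  have "F > 0" using assms by (smt (verit) mult_pos_pos)
  have "N powr (- \<gamma>) \<le> k"
  proof -
    have "N powr (- \<gamma>) = N / N powr (1 + \<gamma>)"
      using assms by (simp add: powr_add powr_minus field_simps)
    also have "\<dots> \<le> k"
      unfolding k_def using assms \<open>F > 0\<close> by (intro divide_left_mono) auto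
    finally show ?thesis .
  qed
  have "k \<le> 1 / \<beta>"
    unfolding k_def using assms \<open>F > 0\<close> by (simp add: field_simps)
  have "N powr (-12 * \<theta> - 4 * \<gamma>) = (N powr (- \<theta>)) ^ 12 * (N powr (- \<gamma>)) ^ 4"
    using assms by (simp add: powr_power powr_add[symmetric])
  also have "\<dots> \<le> \<beta> ^ 12 * k ^ 4"
    using assms \<open>N powr (- \<gamma>) \<le> k\<close> by (intro mult_mono power_mono) auto
  also have "\<dots> = \<beta> ^ 4 * k * (\<beta> ^ 8 * k ^ 3)"
    by (simp add: algebra_simps flip: power_add power_Suc)
  also have "\<dots> \<le> \<beta> ^ 4 * k"
  proof -
    have "\<beta> ^ 8 * k ^ 3 \<le> \<beta> ^ 8 * (1 / \<beta>) ^ 3"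
      using assms \<open>k \<le> 1 / \<beta>\<close> \<open>N powr (- \<gamma>) \<le> k\<close>
      by (intro mult_left_mono power_mono) (auto intro: order_trans[OF powr_ge_zero])
    also have "\<dots> = \<beta> ^ 5"
      using assms by (simp add: field_simps flip: power_add)
    also have "\<dots> \<le> 1"
      using assms by (simp add: power_le_one)
    finally show ?thesis
      using assms \<open>F > 0\<close> by (intro mult_right_le_one_le) (auto simp: k_def)
  qed
  finally show ?thesis unfolding k_def by (simp add: mult.commute)
qed

section \<open>Three-term progressions\<close>

lemma sum_product_fourier_expansion:
  assumes "p > 0"
    and "\<And>m d. m \<in> vecs p n \<Longrightarrow> d \<in> vecs p n \<Longrightarrow> u m d \<in> vecs p n \<and> v m d \<in> vecs p n"
  shows "(\<Sum>d\<in>vecs p n. \<Sum>m\<in>vecs p n. of_real (h (u m d)) * of_real (h (v m d)) * K m d)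
    = (\<Sum>a\<in>vecs p n. \<Sum>b\<in>vecs p n. fourier p n h a * fourier p n h b *
        (\<Sum>d\<in>vecs p n. \<Sum>m\<in>vecs p n. character p n (- a) (u m d) * character p n (- b) (v m d) * K m d))
      / of_nat (p ^ n) ^ 2"
proof -
  let ?V = "vecs p n" and ?N = "of_nat (p ^ n) :: complex"
  let ?Y = "\<lambda>a b d m. fourier p n h a * fourier p n h b *
     (character p n (- a) (u m d) * character p n (- b) (v m d) * K m d) / ?N ^ 2"
  have "of_real (h (u m d)) * of_real (h (v m d)) * K m d = (\<Sum>a\<in>?V. \<Sum>b\<in>?V. ?Y a b d m)"
    if "m \<in> ?V" "d \<in> ?V" for m d
  proof -
    have "of_real (h (u m d)) * of_real (h (v m d)) * K m d
        = (\<Sum>a\<in>?V. fourier p n h a * character p n (- a) (u m d)) / ?N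
        * ((\<Sum>b\<in>?V. fourier p n h b * character p n (- b) (v m d)) / ?N) * K m d"
      using assms(2)[OF that] fourier_inversion[OF \<open>p > 0\<close>, of _ n h] by simp
    also have "\<dots> = (\<Sum>a\<in>?V. \<Sum>b\<in>?V. ?Y a b d m)"
      by (simp add: sum_distrib_left sum_distrib_right sum_divide_distrib power2_eq_square mult_ac)
        (subst sum.swap, simp add: mult_ac)
    finally show ?thesis .
  qed
  then have "(\<Sum>d\<in>?V. \<Sum>m\<in>?V. of_real (h (u m d)) * of_real (h (v m d)) * K m d)
      = (\<Sum>d\<in>?V. \<Sum>m\<in>?V. \<Sum>a\<in>?V. \<Sum>b\<in>?V. ?Y a b d m)"
    by simp
  also have "\<dots> = (\<Sum>a\<in>?V. \<Sum>b\<in>?V. \<Sum>d\<in>?V. \<Sum>m\<in>?V. ?Y a b d m)"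
    by (subst sum_swap3, rule sum_swap3)
  finally show ?thesis
    by (simp add: sum_distrib_left sum_divide_distrib)
qed

definition ap_weight :: "nat \<Rightarrow> nat \<Rightarrow> ((nat \<Rightarrow> int) \<Rightarrow> real) \<Rightarrow> ((nat \<Rightarrow> int) \<Rightarrow> real)
    \<Rightarrow> ((nat \<Rightarrow> int) \<Rightarrow> real) \<Rightarrow> (nat \<Rightarrow> int) \<Rightarrow> real" where
  "ap_weight p n f1 f2 f3 d =
     (\<Sum>m\<in>vecs p n. f1 m * f2 (vadd p n m d) * f3 (vadd p n m (vadd p n d d)))"

lemma Lambda3_eq_sum_ap_weight:
  "Lambda3 p n f1 f2 f3 = (\<Sum>d\<in>vecs p n. ap_weight p n f1 f2 f3 d) / real (p ^ n) ^ 2"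
  unfolding Lambda3_def ap_weight_def by (subst sum.swap) (rule refl)

lemma ap_weight_zero:
  assumes "p > 0"
  shows "ap_weight p n f1 f2 f3 0 = (\<Sum>m\<in>vecs p n. f1 m * f2 m * f3 m)"
  using assms by (simp add: ap_weight_def vadd_zero_right zero_in_vecs)

lemma sum_character_fgf:
  assumes "p > 0"
  shows "(\<Sum>d\<in>vecs p n. \<Sum>m\<in>vecs p n. character p n (- a) m
      * character p n (- b) (vadd p n m (vadd p n d d)) * (of_real (g (vadd p n m d)) * character p n e d))
    = (if vanishes_mod p n (a - b + e) then of_nat (p ^ n) * fourier p n g (- a - b) else 0)"
proof -
  let ?V = "vecs p n" and ?m = "vadd p n"
  \<comment> \<open>substituting y = m + d separates the two summations\<close>
  have separate: "character p n (- a) m * character p n (- b) (?m m (?m d d))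
      * (of_real (g (?m m d)) * character p n e d)
    = character p n (a - b + e) d * (of_real (g (?m m d)) * character p n (- a - b) (?m m d))"
    for m d
    by (simp only: character_vadd[OF assms] character_add character_diff character_uminus)
      (simp add: field_simps)
  have "(\<Sum>d\<in>?V. \<Sum>m\<in>?V. character p n (- a) m * character p n (- b) (?m m (?m d d))
      * (of_real (g (?m m d)) * character p n e d))
    = (\<Sum>d\<in>?V. character p n (a - b + e) d *
        (\<Sum>m\<in>?V. of_real (g (?m m d)) * character p n (- a - b) (?m m d)))"
    by (simp only: separate sum_distrib_left)
  also have "\<dots> = (\<Sum>d\<in>?V. character p n (a - b + e) d) * fourier p n g (- a - b)"
    using sum_vadd_translate[OF assms, where h = "\<lambda>y. of_real (g y) * character p n (- a - b) y"]
    by (simp add: fourier_eq_sum_character sum_distrib_right)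
  finally show ?thesis
    using assms by (simp add: sum_character)
qed

lemma sum_character_gff:
  assumes "p > 0"
  shows "(\<Sum>d\<in>vecs p n. \<Sum>m\<in>vecs p n. character p n (- a) (vadd p n m d)
      * character p n (- b) (vadd p n m (vadd p n d d)) * (of_real (g m) * character p n e d))
    = (if vanishes_mod p n (- a - b - b + e) then of_nat (p ^ n) * fourier p n g (- a - b) else 0)"
proof -
  let ?V = "vecs p n" and ?m = "vadd p n"
  have separate: "character p n (- a) (?m m d) * character p n (- b) (?m m (?m d d))
      * (of_real (g m) * character p n e d)
    = character p n (- a - b - b + e) d * (of_real (g m) * character p n (- a - b) m)"
    for m d
    by (simp only: character_vadd[OF assms] character_add character_diff character_uminus)
      (simp add: field_simps)
  have "(\<Sum>d\<in>?V. \<Sum>m\<in>?V. character p n (- a) (?m m d) * character p n (- b) (?m m (?m d d))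
      * (of_real (g m) * character p n e d))
    = (\<Sum>d\<in>?V. character p n (- a - b - b + e) d) * fourier p n g (- a - b)"
    by (simp only: separate sum_distrib_left sum_distrib_right fourier_eq_sum_character)
      (rule sum.swap)
  then show ?thesis
    using assms by (simp add: sum_character)
qed

lemma fourier_ap_weight_fgf:
  assumes "p > 0"
  shows "fourier p n (ap_weight p n f g f) e
    = (\<Sum>a\<in>vecs p n. \<Sum>b\<in>vecs p n. fourier p n f a * fourier p n f b *
        (if vanishes_mod p n (a - b + e) then of_nat (p ^ n) * fourier p n g (- a - b) else 0))
      / of_nat (p ^ n) ^ 2"
proof -
  let ?V = "vecs p n" and ?m = "vadd p n"
  have "fourier p n (ap_weight p n f g f) e = (\<Sum>d\<in>?V. \<Sum>m\<in>?V.
      of_real (f m) * of_real (f (?m m (?m d d))) * (of_real (g (?m m d)) * character p n e d))"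
    by (simp add: fourier_eq_sum_character ap_weight_def sum_distrib_left sum_distrib_right mult_ac)
  also have "\<dots> = (\<Sum>a\<in>?V. \<Sum>b\<in>?V. fourier p n f a * fourier p n f b *
      (\<Sum>d\<in>?V. \<Sum>m\<in>?V. character p n (- a) m * character p n (- b) (?m m (?m d d))
         * (of_real (g (?m m d)) * character p n e d))) / of_nat (p ^ n) ^ 2"
    by (rule sum_product_fourier_expansion) (simp_all add: assms vadd_in_vecs)
  finally show ?thesis
    by (simp only: sum_character_fgf[OF assms])
qed

lemma fourier_ap_weight_gff:
  assumes "p > 0"
  shows "fourier p n (ap_weight p n g f f) e
    = (\<Sum>a\<in>vecs p n. \<Sum>b\<in>vecs p n. fourier p n f a * fourier p n f b *
        (if vanishes_mod p n (- a - b - b + e) then of_nat (p ^ n) * fourier p n g (- a - b) else 0))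
      / of_nat (p ^ n) ^ 2"
proof -
  let ?V = "vecs p n" and ?m = "vadd p n"
  have "fourier p n (ap_weight p n g f f) e = (\<Sum>d\<in>?V. \<Sum>m\<in>?V.
      of_real (f (?m m d)) * of_real (f (?m m (?m d d))) * (of_real (g m) * character p n e d))"
    by (simp add: fourier_eq_sum_character ap_weight_def sum_distrib_left sum_distrib_right mult_ac)
  also have "\<dots> = (\<Sum>a\<in>?V. \<Sum>b\<in>?V. fourier p n f a * fourier p n f b *
      (\<Sum>d\<in>?V. \<Sum>m\<in>?V. character p n (- a) (?m m d) * character p n (- b) (?m m (?m d d))
         * (of_real (g m) * character p n e d))) / of_nat (p ^ n) ^ 2"
    by (rule sum_product_fourier_expansion) (simp_all add: assms vadd_in_vecs)
  finally show ?thesis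
    by (simp only: sum_character_gff[OF assms])
qed

lemma mult_at_zero_le_sum_fourier_powr:
  assumes "p > 0" and P: "\<And>d. d \<in> vecs p n \<Longrightarrow> 0 \<le> P d"
  shows "real (p ^ n) * P 0
    \<le> (\<Sum>e\<in>vecs p n. cmod (fourier p n P e) powr (1/3)) * (\<Sum>d\<in>vecs p n. P d) powr (2/3)"
proof -
  have "real (p ^ n) * P 0 = cmod (\<Sum>e\<in>vecs p n. fourier p n P e)"
    using assms zero_in_vecs[OF assms(1)] by (simp add: sum_fourier norm_mult norm_power)
  also have "\<dots> \<le> (\<Sum>e\<in>vecs p n. cmod (fourier p n P e))"
    by (rule norm_sum)
  also have "\<dots> \<le> (\<Sum>e\<in>vecs p n. cmod (fourier p n P e) powr (1/3)) * (\<Sum>d\<in>vecs p n. P d) powr (1 - 1/3)"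
    using norm_fourier_le[of p n P] P by (intro sum_le_sum_powr_mult_powr) auto
  finally show ?thesis by simp
qed

lemma sum_norm_fourier_powr_le:
  fixes w :: "(nat \<Rightarrow> int) \<Rightarrow> (nat \<Rightarrow> int) \<Rightarrow> nat \<Rightarrow> int"
  assumes "p > 0" and g: "\<And>m. m \<in> vecs p n \<Longrightarrow> 0 \<le> g m"
    and fourier_P: "\<And>e. e \<in> vecs p n \<Longrightarrow> fourier p n P e
      = (\<Sum>a\<in>vecs p n. \<Sum>b\<in>vecs p n. fourier p n f a * fourier p n f b *
          (if vanishes_mod p n (w a b + e) then of_nat (p ^ n) * fourier p n g (- a - b) else 0))
        / of_nat (p ^ n) ^ 2"
  shows "(\<Sum>e\<in>vecs p n. cmod (fourier p n P e) powr (1/3))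
    \<le> expect p n g powr (1/3) * (\<Sum>a\<in>vecs p n. cmod (fourier p n f a) powr (1/3)) ^ 2"
proof -
  let ?V = "vecs p n" and ?N = "real (p ^ n)"
  let ?G = "\<lambda>a b e. if vanishes_mod p n (w a b + e) then of_nat (p ^ n) * fourier p n g (- a - b) else 0"
  have root: "(?N ^ 2) powr (1/3) = ?N powr (2/3)"
    using powr_powr[of ?N 2 "1/3"] by simp
  have "(\<Sum>e\<in>?V. cmod (fourier p n P e) powr (1/3))
      = (\<Sum>e\<in>?V. cmod (\<Sum>a\<in>?V. \<Sum>b\<in>?V. fourier p n f a * fourier p n f b * ?G a b e) powr (1/3))
        / ?N powr (2/3)"
  proof -
    have "cmod (fourier p n P e) powr (1/3)
        = cmod (\<Sum>a\<in>?V. \<Sum>b\<in>?V. fourier p n f a * fourier p n f b * ?G a b e) powr (1/3)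
          / ?N powr (2/3)" if "e \<in> ?V" for e
      using that root by (simp add: fourier_P norm_divide norm_power powr_divide)
    then show ?thesis by (simp add: sum_divide_distrib)
  qed
  also have "\<dots> \<le> (?N * (\<Sum>m\<in>?V. g m)) powr (1/3)
      * (\<Sum>a\<in>?V. cmod (fourier p n f a) powr (1/3)) * (\<Sum>b\<in>?V. cmod (fourier p n f b) powr (1/3))
      / ?N powr (2/3)"
  proof (intro divide_right_mono sum_norm_bilinear_powr_le)
    fix a b
    have "{e \<in> ?V. ?G a b e \<noteq> 0} \<subseteq> {e \<in> ?V. vanishes_mod p n (w a b + e)}" by auto
    from card_mono[OF _ this] show "card {e \<in> ?V. ?G a b e \<noteq> 0} \<le> 1"
      using card_vanishes_mod_le_1[of p n "w a b"] finite_vecs by fastforce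
    show "cmod (?G a b e) \<le> ?N * (\<Sum>m\<in>?V. g m)" for e
      using norm_fourier_le[of p n g "- a - b"] g
      by (auto simp: norm_mult norm_power intro!: mult_left_mono mult_nonneg_nonneg sum_nonneg)
  qed (simp_all add: finite_vecs)
  also have "(?N * (\<Sum>m\<in>?V. g m)) powr (1/3) = ?N powr (2/3) * expect p n g powr (1/3)"
  proof -
    have "?N * (\<Sum>m\<in>?V. g m) = ?N ^ 2 * expect p n g"
      using \<open>p > 0\<close> by (simp add: expect_def power2_eq_square)
    moreover have "expect p n g \<ge> 0"
      using g by (simp add: expect_def sum_nonneg)
    ultimately show ?thesis
      by (simp only: powr_mult root zero_le_power2 of_nat_0_le_iff)
  qed
  also have "?N powr (2/3) * expect p n g powr (1/3)
      * (\<Sum>a\<in>?V. cmod (fourier p n f a) powr (1/3)) * (\<Sum>b\<in>?V. cmod (fourier p n f b) powr (1/3))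
      / ?N powr (2/3) = expect p n g powr (1/3) * (\<Sum>a\<in>?V. cmod (fourier p n f a) powr (1/3)) ^ 2"
    using \<open>p > 0\<close> by (simp add: power2_eq_square)
  finally show ?thesis .
qed

lemma sum_ap_weight_lower_bound:
  fixes w :: "(nat \<Rightarrow> int) \<Rightarrow> (nat \<Rightarrow> int) \<Rightarrow> nat \<Rightarrow> int"
  assumes "p > 0" and g: "\<And>m. m \<in> vecs p n \<Longrightarrow> 0 \<le> g m" and "expect p n g > 0"
    and P: "\<And>d. d \<in> vecs p n \<Longrightarrow> 0 \<le> P d" and P_zero: "(\<Sum>m\<in>vecs p n. g m ^ 3) \<le> P 0"
    and fourier_P: "\<And>e. e \<in> vecs p n \<Longrightarrow> fourier p n P e
      = (\<Sum>a\<in>vecs p n. \<Sum>b\<in>vecs p n. fourier p n f a * fourier p n f b *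
          (if vanishes_mod p n (w a b + e) then of_nat (p ^ n) * fourier p n g (- a - b) else 0))
        / of_nat (p ^ n) ^ 2"
  shows "real (p ^ n) * expect p n g ^ 4 / fnorm p n (1/3) f
    \<le> (\<Sum>d\<in>vecs p n. P d) / real (p ^ n) ^ 2"
proof -
  let ?V = "vecs p n" and ?N = "real (p ^ n)" and ?\<beta> = "expect p n g"
  let ?S = "\<Sum>a\<in>?V. cmod (fourier p n f a) powr (1/3)"
  have "?N * ?\<beta> ^ 3 \<le> P 0"
    using sum_cube_ge_card_mult_mean_cube[of ?V g] g P_zero
    by (simp add: expect_def card_vecs)
  then have "?N\<^sup>2 * ?\<beta> ^ 3 \<le> ?N * P 0"
    using mult_left_mono[of _ _ ?N] by (simp add: power2_eq_square mult.assoc)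
  also have "\<dots> \<le> (\<Sum>e\<in>?V. cmod (fourier p n P e) powr (1/3)) * (\<Sum>d\<in>?V. P d) powr (2/3)"
    using mult_at_zero_le_sum_fourier_powr[OF \<open>p > 0\<close>] P by blast
  also have "\<dots> \<le> ?\<beta> powr (1/3) * ?S\<^sup>2 * (\<Sum>d\<in>?V. P d) powr (2/3)"
    using sum_norm_fourier_powr_le[OF \<open>p > 0\<close> g fourier_P] by (intro mult_right_mono) auto
  finally show ?thesis
    unfolding fnorm_one_third using \<open>p > 0\<close> \<open>?\<beta> > 0\<close> P
    by (intro divide_le_of_root_inequality) (auto intro: sum_nonneg)
qed

lemma Lambda3_fgf_lower_bound:
  assumes "p > 0" and g: "\<And>m. m \<in> vecs p n \<Longrightarrow> 0 \<le> g m \<and> g m \<le> f m" and "expect p n g > 0"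
  shows "real (p ^ n) * expect p n g ^ 4 / fnorm p n (1/3) f \<le> Lambda3 p n f g f"
  unfolding Lambda3_eq_sum_ap_weight
proof (rule sum_ap_weight_lower_bound[where w = "\<lambda>a b. a - b"])
  have "0 \<le> f m" "0 \<le> g m" if "m \<in> vecs p n" for m
    using g[OF that] by auto
  then show "0 \<le> ap_weight p n f g f d" for d
    unfolding ap_weight_def by (auto intro!: sum_nonneg mult_nonneg_nonneg simp: vadd_in_vecs \<open>p > 0\<close>)
  show "(\<Sum>m\<in>vecs p n. g m ^ 3) \<le> ap_weight p n f g f 0"
    unfolding ap_weight_zero[OF \<open>p > 0\<close>] using g by (intro sum_mono cube_le_mult_of_le) auto
qed (use assms fourier_ap_weight_fgf in auto)

lemma Lambda3_gff_lower_bound: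
  assumes "p > 0" and g: "\<And>m. m \<in> vecs p n \<Longrightarrow> 0 \<le> g m \<and> g m \<le> f m" and "expect p n g > 0"
  shows "real (p ^ n) * expect p n g ^ 4 / fnorm p n (1/3) f \<le> Lambda3 p n g f f"
  unfolding Lambda3_eq_sum_ap_weight
proof (rule sum_ap_weight_lower_bound[where w = "\<lambda>a b. - a - b - b"])
  have "0 \<le> f m" "0 \<le> g m" if "m \<in> vecs p n" for m
    using g[OF that] by auto
  then show "0 \<le> ap_weight p n g f f d" for d
    unfolding ap_weight_def by (auto intro!: sum_nonneg mult_nonneg_nonneg simp: vadd_in_vecs \<open>p > 0\<close>)
  show "(\<Sum>m\<in>vecs p n. g m ^ 3) \<le> ap_weight p n g f f 0"
    unfolding ap_weight_zero[OF \<open>p > 0\<close>]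
  proof (rule sum_mono)
    fix m assume "m \<in> vecs p n"
    then have "g m ^ 3 \<le> f m * g m * f m" using g by (intro cube_le_mult_of_le) auto
    then show "g m ^ 3 \<le> g m * f m * f m" by (simp add: mult_ac)
  qed
qed (use assms fourier_ap_weight_gff in auto)

theorem corollary1:
  fixes p n :: nat and \<theta> \<gamma> :: real and f g :: "(nat \<Rightarrow> int) \<Rightarrow> real"
  assumes "prime p" and "n \<ge> 1"
    and "\<And>m. m \<in> vecs p n \<Longrightarrow> 0 \<le> f m \<and> f m \<le> 1"
    and "\<And>m. m \<in> vecs p n \<Longrightarrow> 0 \<le> g m \<and> g m \<le> 1"
    and "\<And>m. m \<in> vecs p n \<Longrightarrow> f m \<ge> g m"
    and "expect p n f \<ge> expect p n g"
    and "expect p n g \<ge> real (p ^ n) powr (- \<theta>)"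
    and "fnorm p n (1/3) f < real (p ^ n) powr (1 + \<gamma>)"
  shows "Lambda3 p n f g f \<ge> 10 powr (-10) * real p powr (-8) * real (p ^ n) powr (-12 * \<theta> - 4 * \<gamma>)
     \<and> Lambda3 p n g f f \<ge> 10 powr (-10) * real p powr (-8) * real (p ^ n) powr (-12 * \<theta> - 4 * \<gamma>)"
proof -
  have "p > 0" using \<open>prime p\<close> prime_gt_0_nat by blast
  define \<beta> where "\<beta> = expect p n g"
  have g: "\<And>m. m \<in> vecs p n \<Longrightarrow> 0 \<le> g m \<and> g m \<le> f m" using assms(4,5) by auto
  have "0 < real (p ^ n) powr (- \<theta>)" using \<open>p > 0\<close> by simp
  with assms(7) have "0 < \<beta>" unfolding \<beta>_def by linarith
  have "\<beta> \<le> 1"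
    using sum_bounded_above[of "vecs p n" g 1] assms(4) \<open>p > 0\<close>
    by (simp add: \<beta>_def expect_def card_vecs)
  moreover have "real (p ^ n) * \<beta> \<le> fnorm p n (1/3) f"
    using card_mult_expect_le_fnorm[OF \<open>p > 0\<close>, of "1/3"] assms(5) by (simp add: \<beta>_def)
  ultimately have "real (p ^ n) powr (-12 * \<theta> - 4 * \<gamma>) \<le> real (p ^ n) * \<beta> ^ 4 / fnorm p n (1/3) f"
    using \<open>p > 0\<close> \<open>0 < \<beta>\<close> \<open>\<beta> \<le> 1\<close> assms(7,8)
    by (intro powr_le_of_density_bounds) (simp_all add: \<beta>_def)
  moreover have "10 powr (-10) * real p powr (-8) \<le> (1::real)"
    using \<open>p > 0\<close> by (intro mult_le_one) (simp_all add: powr_minus_divide)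
  ultimately have "10 powr (-10) * real p powr (-8) * real (p ^ n) powr (-12 * \<theta> - 4 * \<gamma>)
      \<le> real (p ^ n) * \<beta> ^ 4 / fnorm p n (1/3) f"
    by (meson mult_left_le_one_le order_trans powr_ge_zero zero_le_mult_iff)
  then show ?thesis
    using Lambda3_fgf_lower_bound[OF \<open>p > 0\<close> g] Lambda3_gff_lower_bound[OF \<open>p > 0\<close> g]
      \<open>0 < \<beta>\<close> unfolding \<beta>_def by (meson order_trans)
qed

end
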